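(* Let $n\ge1$ be an integer and consider the hypersurface $X_n=\{w^2+x^2+y^2+z^{n+1}=0\}\subset\mathbb{C}^4$ with weights $\zeta=\left(\frac{2n+2}{n+3},\frac{2n+2}{n+3},\frac{2n+2}{n+3},\frac{4}{n+3}\right)$ on $(w,x,y,z)$. Then $a_0(0)=a_1(0)=\frac{(n+3)^3}{8(n+1)^2}$. For the test symmetry $\eta=(0,0,0,1)$ the Futaki invariant is $F=\frac{(3-n)(n+3)^3}{32(n+1)^2}$, and for $\eta=(1,0,0,0)$ it is $F=\frac{n(n+3)^3}{8(n+1)^3}$. Consequently, for $n\ge4$ there is a test symmetry with $F<0$, so $X_n$ is not K-semistable; and for $n=3$, $\eta=(0,0,0,1)$ has $F=0$ while $c_0-b_0^2/a_0=\frac{27}{128}\neq0$, so $X_3$ is not K-stable.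
   Context: Convention: for a weighted homogeneous hypersurface $\{f=0\}\subset\mathbb{C}^{N}$ with variable weights $k_i>0$ and $f$ of weighted degree $d$, and a test symmetry $\eta$ with charges $v_i$ for which the terms of $f$ of lowest $\eta$-weight have $\eta$-weight $0$, the perturbed Hilbert series is $H_\epsilon(t)=(1-t^{d})/\prod_i(1-t^{k_i+\epsilon v_i})$. With $n=N-1$ and $H_\epsilon(e^{-s})=a_0(\epsilon)s^{-n}+a_1(\epsilon)s^{-(n-1)}+O(s^{-(n-2)})$, the Futaki invariant is $F=n\,a_1'(0)-(n-1)a_0'(0)$, and $b_0=-a_0'(0)/n$, $c_0=a_0''(0)/(n(n+1))$, $a_0=a_0(0)$. A ring is K-semistable if $F\ge0$ for every test symmetry, and K-stable if moreover $F=0$ only when the norm $c_0-b_0^2/a_0$ (for non-trivial test configurations) vanishes. *)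

theory Defs
  imports "HOL-Analysis.Analysis"
begin

text \<open>A weighted homogeneous hypersurface {f = 0} in C^N is recorded by the list of
  exponent vectors (length N) of the monomials of f (all with nonzero coefficient),
  together with the list k of variable weights.\<close>

definition wdeg :: "real list \<Rightarrow> nat list \<Rightarrow> real" where
  "wdeg k \<alpha> = (\<Sum>i<length k. real (\<alpha> ! i) * k ! i)"

text \<open>weighted degree d of f (f weighted homogeneous, so any monomial may be used)\<close>
definition hdeg :: "nat list list \<Rightarrow> real list \<Rightarrow> real" where
  "hdeg monos k = wdeg k (hd monos)"

definition hilb :: "real list \<Rightarrow> real list \<Rightarrow> real \<Rightarrow> real \<Rightarrow> real \<Rightarrow> real" where
  "hilb k v d \<epsilon> t = (1 - t powr d) / (\<Prod>i<length k. (1 - t powr (k ! i + \<epsilon> * v ! i)))"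

definition dimn :: "real list \<Rightarrow> nat" where
  "dimn k = length k - 1"

text \<open>H_eps(e^-s) = a0(eps) s^-n + a1(eps) s^-(n-1) + O(s^-(n-2)) as s -> 0+\<close>
definition a0coef :: "real list \<Rightarrow> real list \<Rightarrow> real \<Rightarrow> real \<Rightarrow> real" where
  "a0coef k v d \<epsilon> = Lim (at_right 0) (\<lambda>s. s ^ dimn k * hilb k v d \<epsilon> (exp (- s)))"

definition a1coef :: "real list \<Rightarrow> real list \<Rightarrow> real \<Rightarrow> real \<Rightarrow> real" where
  "a1coef k v d \<epsilon> = Lim (at_right 0)
     (\<lambda>s. s ^ (dimn k - 1) * (hilb k v d \<epsilon> (exp (- s)) - a0coef k v d \<epsilon> / s ^ dimn k))"

definition futaki :: "real list \<Rightarrow> real list \<Rightarrow> real \<Rightarrow> real" where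
  "futaki k v d = real (dimn k) * deriv (a1coef k v d) 0
                  - (real (dimn k) - 1) * deriv (a0coef k v d) 0"

definition b0coef :: "real list \<Rightarrow> real list \<Rightarrow> real \<Rightarrow> real" where
  "b0coef k v d = - deriv (a0coef k v d) 0 / real (dimn k)"

definition c0coef :: "real list \<Rightarrow> real list \<Rightarrow> real \<Rightarrow> real" where
  "c0coef k v d = deriv (deriv (a0coef k v d)) 0 / (real (dimn k) * (real (dimn k) + 1))"

definition knorm :: "real list \<Rightarrow> real list \<Rightarrow> real \<Rightarrow> real" where
  "knorm k v d = c0coef k v d - (b0coef k v d)^2 / a0coef k v d 0"

definition ewt :: "real list \<Rightarrow> nat list \<Rightarrow> real" where
  "ewt v \<alpha> = (\<Sum>i<length v. real (\<alpha> ! i) * v ! i)"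

definition test_symmetry :: "nat list list \<Rightarrow> real list \<Rightarrow> real list \<Rightarrow> bool" where
  "test_symmetry monos k v \<longleftrightarrow> length v = length k \<and> (\<forall>i<length v. v ! i \<in> \<int>)
     \<and> Min (ewt v ` set monos) = 0"

definition K_semistable :: "nat list list \<Rightarrow> real list \<Rightarrow> bool" where
  "K_semistable monos k \<longleftrightarrow>
     (\<forall>v. test_symmetry monos k v \<longrightarrow> futaki k v (hdeg monos k) \<ge> 0)"

definition K_stable :: "nat list list \<Rightarrow> real list \<Rightarrow> bool" where
  "K_stable monos k \<longleftrightarrow> K_semistable monos k \<and>
     (\<forall>v. test_symmetry monos k v \<longrightarrow> futaki k v (hdeg monos k) = 0
          \<longrightarrow> knorm k v (hdeg monos k) = 0)"

text \<open>X_n = {w^2 + x^2 + y^2 + z^(n+1) = 0}, variables ordered (w,x,y,z)\<close>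
definition Xn_monos :: "nat \<Rightarrow> nat list list" where
  "Xn_monos n = [[2,0,0,0],[0,2,0,0],[0,0,2,0],[0,0,0,n+1]]"

definition zeta :: "nat \<Rightarrow> real list" where
  "zeta n = [(2*real n+2)/(real n+3), (2*real n+2)/(real n+3), (2*real n+2)/(real n+3),
             4/(real n+3)]"

end

theory Submission
  imports Defs "HOL-Real_Asymp.Real_Asymp"
begin

text \<open>Put \<open>w\<^sub>i = k\<^sub>i + \<epsilon> v\<^sub>i\<close> and \<open>t = exp (-s)\<close>. Every factor \<open>1 - exp (-w s)\<close> of the Hilbert
  series equals \<open>w s (1 - w s / 2 + o(s))\<close>, so
  \<open>H\<^sub>\<epsilon>(exp (-s)) = (d / \<Prod> w\<^sub>i) s\<^sup>-\<^sup>n (1 + (\<Sum> w\<^sub>i - d) s / 2 + o(s))\<close>: for every weighted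
  homogeneous hypersurface \<open>a\<^sub>0(\<epsilon>) = d / \<Prod> w\<^sub>i\<close> and \<open>a\<^sub>1(\<epsilon>) = a\<^sub>0(\<epsilon>) (\<Sum> w\<^sub>i - d) / 2\<close>.
  For a test symmetry with charge 1 on a single coordinate \<open>j\<close> these are rational functions
  of \<open>\<epsilon>\<close>, and differentiating at \<open>\<epsilon> = 0\<close> gives, with \<open>\<sigma> = \<Sum> k\<^sub>i - d\<close>,
  \<open>F = a\<^sub>0 (n (k\<^sub>j - \<sigma>) + 2 (n - 1)) / (2 k\<^sub>j)\<close> and \<open>c\<^sub>0 - b\<^sub>0\<^sup>2 / a\<^sub>0 = a\<^sub>0 (n - 1) / (n\<^sup>2 (n + 1) k\<^sub>j\<^sup>2)\<close>.
  For \<open>X\<^sub>n\<close> one has \<open>\<sigma> = 2\<close>, and the stated values follow.\<close>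

definition unit_expansion :: "(real \<Rightarrow> real) \<Rightarrow> real \<Rightarrow> bool" where
  "unit_expansion f p \<longleftrightarrow> ((\<lambda>s. (f s - 1) / s) \<longlongrightarrow> p) (at_right 0)"

lemma unit_expansion_tendsto:
  assumes "unit_expansion f p"
  shows "(f \<longlongrightarrow> 1) (at_right 0)"
proof -
  have "((\<lambda>s. s * ((f s - 1) / s) + 1) \<longlongrightarrow> 0 * p + 1) (at_right 0)"
    using assms unfolding unit_expansion_def by (intro tendsto_intros) auto
  moreover have "\<forall>\<^sub>F s in at_right 0. s * ((f s - 1) / s) + 1 = f s"
    using eventually_at_right_less[of 0] by eventually_elim simp
  ultimately show ?thesis
    by (simp add: tendsto_cong)
qed

lemma unit_expansion_mult:
  assumes "unit_expansion f p" "unit_expansion g q"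
  shows "unit_expansion (\<lambda>s. f s * g s) (p + q)"
proof -
  have "((\<lambda>s. f s * ((g s - 1) / s) + (f s - 1) / s) \<longlongrightarrow> 1 * q + p) (at_right 0)"
    using assms unit_expansion_tendsto[OF assms(1)] unfolding unit_expansion_def
    by (intro tendsto_intros)
  moreover have "f s * ((g s - 1) / s) + (f s - 1) / s = (f s * g s - 1) / s" for s
    by (cases "s = 0") (simp_all add: field_simps)
  ultimately show ?thesis
    unfolding unit_expansion_def by (simp add: add.commute)
qed

lemma unit_expansion_divide:
  assumes "unit_expansion f p" "unit_expansion g q"
  shows "unit_expansion (\<lambda>s. f s / g s) (p - q)"
proof -
  have g: "(g \<longlongrightarrow> 1) (at_right 0)"
    using assms(2) by (rule unit_expansion_tendsto)
  have "((\<lambda>s. ((f s - 1) / s - (g s - 1) / s) / g s) \<longlongrightarrow> (p - q) / 1) (at_right 0)"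
    using assms g unfolding unit_expansion_def by (intro tendsto_intros) auto
  moreover have "\<forall>\<^sub>F s in at_right 0. g s \<noteq> 0"
    using tendsto_imp_eventually_ne[OF g] by simp
  then have "\<forall>\<^sub>F s in at_right 0. ((f s - 1) / s - (g s - 1) / s) / g s = (f s / g s - 1) / s"
    using eventually_at_right_less[of 0] by eventually_elim (simp add: field_simps)
  ultimately show ?thesis
    unfolding unit_expansion_def by (simp add: tendsto_cong)
qed

lemma unit_expansion_prod:
  assumes "finite I" "\<And>i. i \<in> I \<Longrightarrow> unit_expansion (f i) (p i)"
  shows "unit_expansion (\<lambda>s. \<Prod>i\<in>I. f i s) (\<Sum>i\<in>I. p i)"
  using assms
proof (induction I rule: finite_induct)
  case empty
  then show ?case by (simp add: unit_expansion_def)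
next
  case (insert i I)
  then show ?case by (simp add: unit_expansion_mult)
qed

definition exp_ratio :: "real \<Rightarrow> real \<Rightarrow> real" where
  "exp_ratio x s = (1 - exp (- s * x)) / (x * s)"

lemma unit_expansion_exp_ratio:
  assumes "x > 0"
  shows "unit_expansion (exp_ratio x) (- x / 2)"
  unfolding unit_expansion_def exp_ratio_def using assms by real_asymp

lemma exp_ratio_pos: "x > 0 \<Longrightarrow> s > 0 \<Longrightarrow> exp_ratio x s > 0"
  by (simp add: exp_ratio_def)

lemma hilb_exp_minus:
  fixes k v :: "real list" and d \<epsilon> s :: real
  defines "w \<equiv> \<lambda>i. k ! i + \<epsilon> * v ! i"
  assumes "length k \<ge> 1" "d > 0" "\<forall>i<length k. w i > 0" "s > 0"
  shows "s ^ (length k - 1) * hilb k v d \<epsilon> (exp (- s))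
           = d / (\<Prod>i<length k. w i) * (exp_ratio d s / (\<Prod>i<length k. exp_ratio (w i) s))"
proof -
  let ?N = "length k"
  define W where "W = (\<Prod>i<?N. w i)"
  define P where "P = (\<Prod>i<?N. exp_ratio (w i) s)"
  have one_minus: "1 - exp (- s) powr x = x * s * exp_ratio x s" if "x > 0" for x
    using that assms(5) by (simp add: exp_ratio_def powr_def)
  have "(\<Prod>i<?N. 1 - exp (- s) powr w i) = (\<Prod>i<?N. w i * s * exp_ratio (w i) s)"
    using assms(4) by (intro prod.cong refl one_minus) auto
  also have "\<dots> = W * s ^ ?N * P"
    by (simp add: prod.distrib W_def P_def)
  also have "s ^ ?N = s ^ (?N - 1) * s"
    using assms(2) by (cases ?N) auto
  finally have "hilb k v d \<epsilon> (exp (- s)) = d * s * exp_ratio d s / (W * (s ^ (?N - 1) * s) * P)"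
    by (simp add: hilb_def w_def one_minus[OF assms(3)])
  moreover have "P > 0" "W > 0"
    using assms(4,5) by (auto simp: W_def P_def intro!: prod_pos exp_ratio_pos)
  ultimately show ?thesis
    using assms(5) unfolding W_def[symmetric] P_def[symmetric] by (simp add: field_simps)
qed

lemma a0coef_a1coef_eq:
  fixes k v :: "real list" and d \<epsilon> :: real
  defines "w \<equiv> \<lambda>i. k ! i + \<epsilon> * v ! i"
  assumes "length k \<ge> 2" "d > 0" "\<forall>i<length k. w i > 0"
  shows "a0coef k v d \<epsilon> = d / (\<Prod>i<length k. w i)"
    and "a1coef k v d \<epsilon> = a0coef k v d \<epsilon> * ((\<Sum>i<length k. w i) - d) / 2"
proof -
  let ?N = "length k"
  let ?H = "\<lambda>s. hilb k v d \<epsilon> (exp (- s))"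
  define A where "A = d / (\<Prod>i<?N. w i)"
  define G where "G s = exp_ratio d s / (\<Prod>i<?N. exp_ratio (w i) s)" for s
  have G: "unit_expansion G (- d / 2 - (\<Sum>i<?N. - w i / 2))"
    unfolding G_def using assms(3,4)
    by (intro unit_expansion_divide unit_expansion_prod unit_expansion_exp_ratio) auto
  have scaled: "\<forall>\<^sub>F s in at_right 0. s ^ (?N - 1) * ?H s = A * G s"
    using eventually_at_right_less[of 0]
    by eventually_elim (use hilb_exp_minus[where k = k and v = v and d = d and \<epsilon> = \<epsilon>] assms in \<open>simp add: A_def G_def w_def\<close>)
  have "((\<lambda>s. A * G s) \<longlongrightarrow> A * 1) (at_right 0)"
    using unit_expansion_tendsto[OF G] by (intro tendsto_intros)
  then have "((\<lambda>s. s ^ (?N - 1) * ?H s) \<longlongrightarrow> A) (at_right 0)"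
    using scaled by (simp add: tendsto_cong)
  then show a0: "a0coef k v d \<epsilon> = A"
    unfolding a0coef_def dimn_def by (intro tendsto_Lim) auto
  have "\<forall>\<^sub>F s in at_right 0.
      s ^ (dimn k - 1) * (?H s - a0coef k v d \<epsilon> / s ^ dimn k) = A * ((G s - 1) / s)"
    using eventually_at_right_less[of 0] scaled
  proof eventually_elim
    case (elim s)
    have "?N - 1 = Suc (?N - 2)"
      using assms(2) by linarith
    then have "s ^ (?N - 1) = s ^ (?N - 2) * s"
      by (simp only: power_Suc2)
    with elim show ?case
      by (simp add: a0 dimn_def field_simps numeral_2_eq_2)
  qed
  moreover have "((\<lambda>s. A * ((G s - 1) / s)) \<longlongrightarrow> A * (- d / 2 - (\<Sum>i<?N. - w i / 2))) (at_right 0)"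
    using G unfolding unit_expansion_def by (intro tendsto_intros)
  ultimately have "a1coef k v d \<epsilon> = A * (- d / 2 - (\<Sum>i<?N. - w i / 2))"
    unfolding a1coef_def by (intro tendsto_Lim) (auto simp: tendsto_cong)
  also have "\<dots> = a0coef k v d \<epsilon> * ((\<Sum>i<?N. w i) - d) / 2"
    by (simp add: a0 sum_negf sum_divide_distrib[symmetric] field_simps)
  finally show "a1coef k v d \<epsilon> = a0coef k v d \<epsilon> * ((\<Sum>i<?N. w i) - d) / 2" .
qed

lemma a0coef_pos:
  assumes "length k \<ge> 2" "d > 0" "\<forall>i<length k. k ! i + \<epsilon> * v ! i > 0"
  shows "a0coef k v d \<epsilon> > 0"
  unfolding a0coef_a1coef_eq(1)[OF assms] using assms(2,3) by (auto intro!: divide_pos_pos prod_pos)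

definition unit_charge :: "nat \<Rightarrow> nat \<Rightarrow> real list" where
  "unit_charge N j = (replicate N 0)[j := 1]"

lemma unit_charge_nth: "i < N \<Longrightarrow> unit_charge N j ! i = (if i = j then 1 else 0)"
  by (simp add: unit_charge_def nth_list_update)

lemma a0coef_a1coef_unit_charge:
  fixes k :: "real list" and j :: nat and d \<epsilon> :: real
  defines "e \<equiv> unit_charge (length k) j"
  assumes "length k \<ge> 2" "d > 0" "j < length k" "\<forall>i<length k. k ! i > 0" "k ! j + \<epsilon> > 0"
  shows "a0coef k e d \<epsilon> = a0coef k e d 0 * k ! j / (k ! j + \<epsilon>)"
    and "a1coef k e d \<epsilon> = a0coef k e d \<epsilon> * ((\<Sum>i<length k. k ! i) - d + \<epsilon>) / 2"
proof -
  let ?N = "length k"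
  let ?R = "\<Prod>i\<in>{..<?N} - {j}. k ! i"
  have weight: "k ! i + x * e ! i = (if i = j then k ! j + x else k ! i)" if "i < ?N" for i x
    using that by (simp add: e_def unit_charge_nth)
  have pos: "\<forall>i<?N. k ! i + x * e ! i > 0" if "k ! j + x > 0" for x
    using that assms(5) by (simp add: weight)
  have "(\<Prod>i<?N. k ! i + x * e ! i) = (k ! j + x) * ?R" for x
  proof -
    have "(\<Prod>i<?N. k ! i + x * e ! i) = (\<Prod>i<?N. if i = j then k ! j + x else k ! i)"
      by (intro prod.cong refl) (simp add: weight)
    also have "\<dots> = (k ! j + x) * ?R"
      using assms(4) by (simp add: prod.remove[of _ j] cong: prod.cong_simp)
    finally show ?thesis .
  qed
  then have a0: "a0coef k e d x = d / ((k ! j + x) * ?R)" if "k ! j + x > 0" for x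
    using a0coef_a1coef_eq(1)[OF assms(2,3) pos[OF that]] by simp
  have "?R > 0"
    using assms(5) by (intro prod_pos) auto
  moreover have "k ! j > 0"
    using assms(4,5) by simp
  ultimately show "a0coef k e d \<epsilon> = a0coef k e d 0 * k ! j / (k ! j + \<epsilon>)"
    using assms(6) by (simp add: a0)
  have "(\<Sum>i<?N. e ! i) = 1"
    using assms(4) by (simp add: e_def unit_charge_nth cong: sum.cong_simp)
  then have "(\<Sum>i<?N. k ! i + \<epsilon> * e ! i) = (\<Sum>i<?N. k ! i) + \<epsilon>"
    by (simp add: sum.distrib sum_distrib_left[symmetric])
  then show "a1coef k e d \<epsilon> = a0coef k e d \<epsilon> * ((\<Sum>i<?N. k ! i) - d + \<epsilon>) / 2"
    using a0coef_a1coef_eq(2)[OF assms(2,3) pos[OF assms(6)]] by simp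
qed

lemma deriv_eq_on_open:
  assumes "open S" "x \<in> S" "\<And>y. y \<in> S \<Longrightarrow> f y = g y" "(g has_real_derivative D) (at x)"
  shows "deriv f x = D"
  using has_field_derivative_transform_within_open[OF assms(4,1,2)] assms(3)
  by (intro DERIV_imp_deriv) simp

lemma derivs_unit_charge:
  fixes k :: "real list" and j :: nat and d :: real
  defines "e \<equiv> unit_charge (length k) j"
  defines "A \<equiv> a0coef k e d 0" and "\<sigma> \<equiv> (\<Sum>i<length k. k ! i) - d"
  assumes "length k \<ge> 2" "d > 0" "j < length k" "\<forall>i<length k. k ! i > 0"
  shows "deriv (a0coef k e d) 0 = - A / k ! j"
    and "deriv (deriv (a0coef k e d)) 0 = 2 * A / (k ! j)\<^sup>2"
    and "deriv (a1coef k e d) 0 = A * (k ! j - \<sigma>) / (2 * k ! j)"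
proof -
  let ?kj = "k ! j"
  define S where "S = {- ?kj<..}"
  have kj: "?kj > 0"
    using assms(6,7) by simp
  have S: "open S" "0 \<in> S"
    using kj by (auto simp: S_def)
  have in_S: "?kj + y > 0" if "y \<in> S" for y
    using that by (simp add: S_def)
  have a0: "a0coef k e d y = A * ?kj / (?kj + y)" if "y \<in> S" for y
    using a0coef_a1coef_unit_charge(1)[OF assms(4-7) in_S[OF that]]
    by (simp add: A_def e_def)
  have a1: "a1coef k e d y = A * ?kj * (\<sigma> + y) / (2 * (?kj + y))" if "y \<in> S" for y
  proof -
    have "a1coef k e d y = a0coef k e d y * (\<sigma> + y) / 2"
      using a0coef_a1coef_unit_charge(2)[OF assms(4-7) in_S[OF that]]
      by (simp add: e_def \<sigma>_def algebra_simps)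
    then show ?thesis
      by (simp add: a0[OF that])
  qed
  have da0: "deriv (a0coef k e d) y = - A * ?kj / (?kj + y)\<^sup>2" if "y \<in> S" for y
    by (rule deriv_eq_on_open[OF S(1) that a0])
      (use that in \<open>auto simp: S_def power2_eq_square intro!: derivative_eq_intros\<close>)
  show "deriv (a0coef k e d) 0 = - A / ?kj"
    using da0[OF S(2)] kj by (simp add: power2_eq_square)
  have "deriv (deriv (a0coef k e d)) 0 = 2 * A * ?kj / ?kj ^ 3"
    by (rule deriv_eq_on_open[OF S da0])
      (use kj in \<open>auto simp: eval_nat_numeral field_simps intro!: derivative_eq_intros\<close>)
  then show "deriv (deriv (a0coef k e d)) 0 = 2 * A / ?kj\<^sup>2"
    using kj by (simp add: eval_nat_numeral)
  have "deriv (a1coef k e d) 0 = A * ?kj * (?kj - \<sigma>) / (2 * ?kj\<^sup>2)"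
    by (rule deriv_eq_on_open[OF S a1])
      (use kj in \<open>auto simp: power2_eq_square field_simps intro!: derivative_eq_intros\<close>)
  then show "deriv (a1coef k e d) 0 = A * (?kj - \<sigma>) / (2 * ?kj)"
    using kj by (simp add: power2_eq_square)
qed

lemma futaki_unit_charge:
  fixes k :: "real list" and j :: nat and d :: real
  defines "e \<equiv> unit_charge (length k) j" and "n \<equiv> real (dimn k)"
  defines "A \<equiv> a0coef k e d 0" and "\<sigma> \<equiv> (\<Sum>i<length k. k ! i) - d"
  assumes "length k \<ge> 2" "d > 0" "j < length k" "\<forall>i<length k. k ! i > 0"
  shows "futaki k e d = A * (n * (k ! j - \<sigma>) + 2 * (n - 1)) / (2 * k ! j)"
proof -
  have "k ! j > 0"
    using assms(7,8) by simp
  then show ?thesis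
    unfolding futaki_def e_def n_def A_def \<sigma>_def derivs_unit_charge(1,3)[OF assms(5-8)]
    by (simp add: field_simps)
qed

lemma knorm_unit_charge:
  fixes k :: "real list" and j :: nat and d :: real
  defines "e \<equiv> unit_charge (length k) j" and "n \<equiv> real (dimn k)"
  defines "A \<equiv> a0coef k e d 0"
  assumes "length k \<ge> 2" "d > 0" "j < length k" "\<forall>i<length k. k ! i > 0"
  shows "knorm k e d = A * (n - 1) / (n\<^sup>2 * (n + 1) * (k ! j)\<^sup>2)"
proof -
  have "k ! j \<noteq> 0" "n \<noteq> 0" "n + 1 \<noteq> 0"
    using assms(4,6,7) by (auto simp: n_def dimn_def)
  moreover have "A > 0"
    unfolding A_def using assms(4,5,7) by (intro a0coef_pos) auto
  ultimately have "2 * A / (k ! j)\<^sup>2 / (n * (n + 1)) - (- (- A / k ! j) / n)\<^sup>2 / A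
      = A * (n - 1) / (n\<^sup>2 * (n + 1) * (k ! j)\<^sup>2)"
    by (simp add: divide_simps less_imp_neq power2_eq_square) (simp add: algebra_simps)
  then show ?thesis
    unfolding knorm_def c0coef_def b0coef_def e_def n_def A_def derivs_unit_charge(1,2)[OF assms(4-7)] .
qed

lemma not_K_semistable:
  assumes "test_symmetry monos k v" "futaki k v (hdeg monos k) < 0"
  shows "\<not> K_semistable monos k"
  using assms by (auto simp: K_semistable_def)

lemma not_K_stable:
  assumes "test_symmetry monos k v" "futaki k v (hdeg monos k) = 0" "knorm k v (hdeg monos k) \<noteq> 0"
  shows "\<not> K_stable monos k"
  using assms by (auto simp: K_stable_def)

lemma length_zeta: "length (zeta n) = 4"
  by (simp add: zeta_def)

lemma dimn_zeta: "dimn (zeta n) = 3"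
  by (simp add: zeta_def dimn_def)

lemma zeta_pos: "\<forall>i<length (zeta n). zeta n ! i > 0"
  by (simp add: zeta_def numeral_eq_Suc less_Suc_eq)

lemma zeta_eq:
  assumes "u = real n + 1" "t = real n + 3"
  shows "zeta n = [2 * u / t, 2 * u / t, 2 * u / t, 4 / t]"
  using assms by (simp add: zeta_def algebra_simps)

lemma hdeg_Xn: "hdeg (Xn_monos n) (zeta n) = 2 * zeta n ! 0"
  by (simp add: hdeg_def wdeg_def Xn_monos_def zeta_def numeral_eq_Suc)

lemma hdeg_Xn_pos: "hdeg (Xn_monos n) (zeta n) > 0"
  using zeta_pos[of n] by (simp add: hdeg_Xn length_zeta)

lemma sum_zeta_minus_hdeg: "(\<Sum>i<length (zeta n). zeta n ! i) - hdeg (Xn_monos n) (zeta n) = 2"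
proof -
  define u t where "u = real n + 1" and "t = real n + 3"
  have "t = u + 2" "t > 0"
    by (simp_all add: u_def t_def)
  then show ?thesis
    unfolding hdeg_Xn unfolding zeta_eq[OF u_def t_def]
    by (simp add: numeral_eq_Suc diff_divide_distrib[symmetric] add_divide_distrib[symmetric] field_simps)
qed

lemma a0coef_a1coef_Xn:
  fixes n :: nat and v :: "real list"
  defines "d \<equiv> hdeg (Xn_monos n) (zeta n)"
  shows "a0coef (zeta n) v d 0 = (real n + 3) ^ 3 / (8 * (real n + 1)\<^sup>2)"
    and "a1coef (zeta n) v d 0 = (real n + 3) ^ 3 / (8 * (real n + 1)\<^sup>2)"
proof -
  define u t where "u = real n + 1" and "t = real n + 3"
  have ut: "u > 0" "t > 0"
    by (simp_all add: u_def t_def)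
  have d: "d > 0"
    unfolding d_def by (rule hdeg_Xn_pos)
  have "a0coef (zeta n) v d 0 = d / (\<Prod>i<4. zeta n ! i)"
    using a0coef_a1coef_eq(1)[where k = "zeta n" and v = v and d = d and \<epsilon> = 0]
      d zeta_pos[of n]
    by (simp add: length_zeta)
  also have "\<dots> = t ^ 3 / (8 * u\<^sup>2)"
    unfolding d_def hdeg_Xn unfolding zeta_eq[OF u_def t_def] using ut
    by (simp add: numeral_eq_Suc field_simps power2_eq_square)
  finally show a0: "a0coef (zeta n) v d 0 = (real n + 3) ^ 3 / (8 * (real n + 1)\<^sup>2)"
    by (simp add: u_def t_def)
  show "a1coef (zeta n) v d 0 = (real n + 3) ^ 3 / (8 * (real n + 1)\<^sup>2)"
    using a0coef_a1coef_eq(2)[where k = "zeta n" and v = v and d = d and \<epsilon> = 0]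
      d zeta_pos[of n] sum_zeta_minus_hdeg[of n]
    by (simp add: length_zeta a0 flip: d_def)
qed

lemma test_symmetry_Xn_z: "test_symmetry (Xn_monos n) (zeta n) [0, 0, 0, 1]"
  by (simp add: test_symmetry_def zeta_def ewt_def Xn_monos_def numeral_eq_Suc less_Suc_eq)

lemma futaki_Xn_unit_charge:
  assumes "j < 4"
  shows "futaki (zeta n) (unit_charge 4 j) (hdeg (Xn_monos n) (zeta n))
           = (real n + 3) ^ 3 / (8 * (real n + 1)\<^sup>2) * (3 * zeta n ! j - 2) / (2 * zeta n ! j)"
proof -
  let ?d = "hdeg (Xn_monos n) (zeta n)"
  have "futaki (zeta n) (unit_charge (length (zeta n)) j) ?d
      = a0coef (zeta n) (unit_charge (length (zeta n)) j) ?d 0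
        * (real (dimn (zeta n)) * (zeta n ! j - ((\<Sum>i<length (zeta n). zeta n ! i) - ?d))
           + 2 * (real (dimn (zeta n)) - 1)) / (2 * zeta n ! j)"
    by (rule futaki_unit_charge) (use assms hdeg_Xn_pos zeta_pos in \<open>auto simp: length_zeta\<close>)
  then show ?thesis
    unfolding sum_zeta_minus_hdeg unfolding length_zeta dimn_zeta a0coef_a1coef_Xn(1)
    by (simp add: algebra_simps)
qed

lemma knorm_Xn_unit_charge:
  assumes "j < 4"
  shows "knorm (zeta n) (unit_charge 4 j) (hdeg (Xn_monos n) (zeta n))
           = (real n + 3) ^ 3 / (8 * (real n + 1)\<^sup>2) / (18 * (zeta n ! j)\<^sup>2)"
proof -
  let ?d = "hdeg (Xn_monos n) (zeta n)"
  have "knorm (zeta n) (unit_charge (length (zeta n)) j) ?d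
      = a0coef (zeta n) (unit_charge (length (zeta n)) j) ?d 0 * (real (dimn (zeta n)) - 1)
        / ((real (dimn (zeta n)))\<^sup>2 * (real (dimn (zeta n)) + 1) * (zeta n ! j)\<^sup>2)"
    by (rule knorm_unit_charge) (use assms hdeg_Xn_pos zeta_pos in \<open>auto simp: length_zeta\<close>)
  then show ?thesis
    unfolding length_zeta dimn_zeta a0coef_a1coef_Xn(1) by simp
qed

lemma futaki_Xn_z:
  "futaki (zeta n) [0, 0, 0, 1] (hdeg (Xn_monos n) (zeta n))
     = (3 - real n) * (real n + 3) ^ 3 / (32 * (real n + 1)\<^sup>2)"
proof -
  define u t where "u = real n + 1" and "t = real n + 3"
  have "u > 0" "t > 0"
    by (simp_all add: u_def t_def)
  have "[0, 0, 0, 1] = unit_charge 4 3"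
    by (simp add: unit_charge_def numeral_eq_Suc)
  then have "futaki (zeta n) [0, 0, 0, 1] (hdeg (Xn_monos n) (zeta n))
      = t ^ 3 / (8 * u\<^sup>2) * (3 * (4 / t) - 2) / (2 * (4 / t))"
    using futaki_Xn_unit_charge[of 3 n] unfolding u_def[symmetric] t_def[symmetric]
    by (simp add: zeta_eq[OF u_def t_def])
  also have "\<dots> = (6 - t) * t ^ 3 / (32 * u\<^sup>2)"
    using \<open>u > 0\<close> \<open>t > 0\<close> by (simp add: field_simps power2_eq_square power3_eq_cube)
  finally show ?thesis
    by (simp add: u_def t_def)
qed

lemma futaki_Xn_w:
  "futaki (zeta n) [1, 0, 0, 0] (hdeg (Xn_monos n) (zeta n))
     = real n * (real n + 3) ^ 3 / (8 * (real n + 1) ^ 3)"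
proof -
  define u t where "u = real n + 1" and "t = real n + 3"
  have "u > 0" "t > 0"
    by (simp_all add: u_def t_def)
  have "[1, 0, 0, 0] = unit_charge 4 0"
    by (simp add: unit_charge_def numeral_eq_Suc)
  then have "futaki (zeta n) [1, 0, 0, 0] (hdeg (Xn_monos n) (zeta n))
      = t ^ 3 / (8 * u\<^sup>2) * (3 * (2 * u / t) - 2) / (2 * (2 * u / t))"
    using futaki_Xn_unit_charge[of 0 n] unfolding u_def[symmetric] t_def[symmetric]
    by (simp add: zeta_eq[OF u_def t_def])
  also have "\<dots> = (6 * u - 2 * t) * t ^ 3 / (32 * u ^ 3)"
    using \<open>u > 0\<close> \<open>t > 0\<close> by (simp add: field_simps power2_eq_square power3_eq_cube)
  also have "6 * u - 2 * t = 4 * real n"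
    by (simp add: u_def t_def)
  finally show ?thesis
    by (simp add: u_def t_def)
qed

lemma knorm_X3_z: "knorm (zeta 3) [0, 0, 0, 1] (hdeg (Xn_monos 3) (zeta 3)) = 27 / 128"
proof -
  have "[0, 0, 0, 1] = unit_charge 4 3"
    by (simp add: unit_charge_def numeral_eq_Suc)
  then show ?thesis
    using knorm_Xn_unit_charge[of 3 3] by (simp add: zeta_def power2_eq_square)
qed

theorem mainTheorem3:
  fixes n :: nat
  assumes "n \<ge> 1"
  shows "(\<forall>v. length v = 4 \<longrightarrow>
            a0coef (zeta n) v (hdeg (Xn_monos n) (zeta n)) 0 = (real n+3)^3 / (8*(real n+1)^2)
          \<and> a1coef (zeta n) v (hdeg (Xn_monos n) (zeta n)) 0 = (real n+3)^3 / (8*(real n+1)^2))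
       \<and> futaki (zeta n) [0,0,0,1] (hdeg (Xn_monos n) (zeta n))
           = (3 - real n) * (real n+3)^3 / (32*(real n+1)^2)
       \<and> futaki (zeta n) [1,0,0,0] (hdeg (Xn_monos n) (zeta n))
           = real n * (real n+3)^3 / (8*(real n+1)^3)
       \<and> (n \<ge> 4 \<longrightarrow> (\<exists>v. test_symmetry (Xn_monos n) (zeta n) v
                         \<and> futaki (zeta n) v (hdeg (Xn_monos n) (zeta n)) < 0)
                   \<and> \<not> K_semistable (Xn_monos n) (zeta n))
       \<and> (n = 3 \<longrightarrow> test_symmetry (Xn_monos n) (zeta n) [0,0,0,1]
                   \<and> futaki (zeta n) [0,0,0,1] (hdeg (Xn_monos n) (zeta n)) = 0
                   \<and> knorm (zeta n) [0,0,0,1] (hdeg (Xn_monos n) (zeta n)) = 27/128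
                   \<and> \<not> K_stable (Xn_monos n) (zeta n))"
proof -
  let ?d = "hdeg (Xn_monos n) (zeta n)"
  let ?z = "[0, 0, 0, 1] :: real list"
  have "futaki (zeta n) ?z ?d < 0 \<and> \<not> K_semistable (Xn_monos n) (zeta n)" if "n \<ge> 4"
  proof -
    have "futaki (zeta n) ?z ?d < 0"
      unfolding futaki_Xn_z using that by (intro divide_neg_pos mult_neg_pos) auto
    then show ?thesis
      using not_K_semistable[OF test_symmetry_Xn_z] by blast
  qed
  moreover have "futaki (zeta n) ?z ?d = 0 \<and> knorm (zeta n) ?z ?d = 27 / 128
      \<and> \<not> K_stable (Xn_monos n) (zeta n)" if "n = 3"
    using that knorm_X3_z not_K_stable[OF test_symmetry_Xn_z] by (simp add: futaki_Xn_z)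
  ultimately show ?thesis
    using a0coef_a1coef_Xn futaki_Xn_z futaki_Xn_w test_symmetry_Xn_z by blast
qed

end
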